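(* In the setting of the context, for every $N\in\mathcal N$: (1) $N^e=\{u\in D: f(d^\ast ud)\in N \text{ for every } d\in D\}$; (2) $N^{ec}=\bigcap_{\sigma\in G}N_\sigma$; (3) $(N_\sigma)^e=N^e$ for every $\sigma\in G$; (4) $N^{ece}=N^e$. For every $M\in\mathcal M$: (5) $(M^c)_\sigma=M^c$ for every $\sigma\in G$; (6) $M^{cec}=M^c$.
   Context: Let $K/F$ be a finite Galois extension of fields of characteristic $0$ with Galois group $G$, $n=|G|$; write $k^\sigma$ for the image of $k$ under $\sigma$. Let $\Phi$ be a normalized $2$-cocycle and $D=(K/F,\Phi)$ the crossed product: right $K$-vector space with basis $(e_\sigma)_{\sigma\in G}$, $e_{\mathrm{id}}=1$, multiplication $(\sum e_\sigma c_\sigma)(\sum e_\tau d_\tau)=\sum e_{\sigma\tau}\Phi(\sigma,\tau)c_\sigma^\tau d_\tau$. Assume $D$ is a division algebra and $\ast$ an involution on $D$ with $K^\ast\subseteq K$. A unital hermitian cone on a ring $R$ with involution $\ast$ is a subset $M\subseteq\{r:r^\ast=r\}$ with $1\in M$, $M+M\subseteq M$, $aMa^\ast\subseteq M$ for all $a\in R$, $M\cap-M=\{0\}$. Assume $a_\sigma:=e_\sigma^\ast e_\sigma\in K$ for all $\sigma$, and let $\mathcal N$ be the set of unital hermitian cones on $(K,\ast)$ containing all $a_\sigma$; assume $\mathcal N\neq\emptyset$. For $N\in\mathcal N$, $N_\sigma=\{k\in K: a_\sigma k^\sigma\in N\}$. Let $\mathcal M$ be the set of unital hermitian cones on $(D,\ast)$.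 Define $f\colon D\to K$ by $f(\sum e_\sigma c_\sigma)=c_{\mathrm{id}}$, and $\lambda\colon D\to M_n(K)$ by $ae_\tau=\sum_\sigma e_\sigma\lambda(a)_{\sigma\tau}$. Let $A=\mathrm{diag}(a_\sigma)_{\sigma\in G}$. For $M\in\mathcal M$ put $M^c=M\cap K$, and for $N\in\mathcal N$ put $N^e=\{c\in D: x^\ast A\lambda(c)x\in N\text{ for every column vector } x\in K^n\}$, where $x^\ast$ is the row vector of the $\ast$-images of the entries of $x$. (Then $M^c\in\mathcal N$ and $N^e\in\mathcal M$.) Compositions are written as superscripts, e.g. $N^{ec}=(N^e)^c$. *)

theory Defs
  imports Main
begin

text \<open>K is the whole type 'k (a field of characteristic 0); G is a finite group of
field automorphisms of K, and F is its fixed field (so K/F is finite Galois with group G,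
by Artin's theorem). We write k^sigma = sigma k. The group law of G is chosen so that
k^(sigma tau) = (k^sigma)^tau, i.e. gmul sigma tau = tau o sigma.\<close>

definition gmul :: "('k \<Rightarrow> 'k) \<Rightarrow> ('k \<Rightarrow> 'k) \<Rightarrow> ('k \<Rightarrow> 'k)" where
  "gmul \<sigma> \<tau> = \<tau> \<circ> \<sigma>"

definition fixed_field :: "('k::field \<Rightarrow> 'k) set \<Rightarrow> 'k set" where
  "fixed_field G = {x. \<forall>\<sigma>\<in>G. \<sigma> x = x}"

definition galois_group :: "('k::field \<Rightarrow> 'k) set \<Rightarrow> bool" where
  "galois_group G \<longleftrightarrow> finite G \<and> id \<in> G \<and>
     (\<forall>\<sigma>\<in>G. \<forall>\<tau>\<in>G. gmul \<sigma> \<tau> \<in> G) \<and>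
     (\<forall>\<sigma>\<in>G. bij \<sigma> \<and> inv \<sigma> \<in> G \<and> \<sigma> 1 = 1 \<and>
        (\<forall>x y. \<sigma> (x + y) = \<sigma> x + \<sigma> y \<and> \<sigma> (x * y) = \<sigma> x * \<sigma> y))"

definition normalized_cocycle ::
  "('k::field \<Rightarrow> 'k) set \<Rightarrow> (('k \<Rightarrow> 'k) \<Rightarrow> ('k \<Rightarrow> 'k) \<Rightarrow> 'k) \<Rightarrow> bool" where
  "normalized_cocycle G \<Phi> \<longleftrightarrow>
     (\<forall>\<sigma>\<in>G. \<forall>\<tau>\<in>G. \<Phi> \<sigma> \<tau> \<noteq> 0) \<and>
     (\<forall>\<sigma>\<in>G. \<Phi> id \<sigma> = 1 \<and> \<Phi> \<sigma> id = 1) \<and>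
     (\<forall>\<sigma>\<in>G. \<forall>\<tau>\<in>G. \<forall>\<rho>\<in>G.
        \<Phi> (gmul \<sigma> \<tau>) \<rho> * \<rho> (\<Phi> \<sigma> \<tau>) = \<Phi> \<sigma> (gmul \<tau> \<rho>) * \<Phi> \<tau> \<rho>)"

text \<open>An element sum e_sigma c_sigma of D is represented by its coefficient function
c : G -> K (extended by 0 outside G).\<close>

type_synonym 'k dvec = "('k \<Rightarrow> 'k) \<Rightarrow> 'k"

definition Dset :: "('k::field \<Rightarrow> 'k) set \<Rightarrow> 'k dvec set" where
  "Dset G = {c. \<forall>\<sigma>. \<sigma> \<notin> G \<longrightarrow> c \<sigma> = 0}"

definition dadd :: "'k::field dvec \<Rightarrow> 'k dvec \<Rightarrow> 'k dvec" where
  "dadd c d = (\<lambda>\<sigma>. c \<sigma> + d \<sigma>)"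

definition dneg :: "'k::field dvec \<Rightarrow> 'k dvec" where
  "dneg c = (\<lambda>\<sigma>. - c \<sigma>)"

definition dzero :: "'k::field dvec" where
  "dzero = (\<lambda>\<sigma>. 0)"

definition ebas :: "('k::field \<Rightarrow> 'k) \<Rightarrow> 'k dvec" where
  "ebas \<sigma> = (\<lambda>\<tau>. if \<tau> = \<sigma> then 1 else 0)"

definition emb :: "'k::field \<Rightarrow> 'k dvec" where
  "emb k = (\<lambda>\<tau>. if \<tau> = id then k else 0)"

definition done_D :: "'k::field dvec" where
  "done_D = emb 1"

text \<open>(sum e_sigma c_sigma)(sum e_tau d_tau) = sum e_(sigma tau) Phi(sigma,tau) c_sigma^tau d_tau\<close>
definition dmul :: "('k::field \<Rightarrow> 'k) set \<Rightarrow> (('k \<Rightarrow> 'k) \<Rightarrow> ('k \<Rightarrow> 'k) \<Rightarrow> 'k)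
    \<Rightarrow> 'k dvec \<Rightarrow> 'k dvec \<Rightarrow> 'k dvec" where
  "dmul G \<Phi> c d = (\<lambda>\<rho>. \<Sum>\<sigma>\<in>G. \<Sum>\<tau>\<in>G.
      if gmul \<sigma> \<tau> = \<rho> then \<Phi> \<sigma> \<tau> * \<tau> (c \<sigma>) * d \<tau> else 0)"

definition division_algebra :: "('k::field \<Rightarrow> 'k) set \<Rightarrow> (('k \<Rightarrow> 'k) \<Rightarrow> ('k \<Rightarrow> 'k) \<Rightarrow> 'k) \<Rightarrow> bool" where
  "division_algebra G \<Phi> \<longleftrightarrow>
     (\<forall>c\<in>Dset G. c \<noteq> dzero \<longrightarrow> (\<exists>d\<in>Dset G. dmul G \<Phi> c d = done_D \<and> dmul G \<Phi> d c = done_D))"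

definition involution :: "('k::field \<Rightarrow> 'k) set \<Rightarrow> (('k \<Rightarrow> 'k) \<Rightarrow> ('k \<Rightarrow> 'k) \<Rightarrow> 'k)
    \<Rightarrow> ('k dvec \<Rightarrow> 'k dvec) \<Rightarrow> bool" where
  "involution G \<Phi> st \<longleftrightarrow>
     (\<forall>x\<in>Dset G. st x \<in> Dset G) \<and>
     (\<forall>x\<in>Dset G. \<forall>y\<in>Dset G. st (dadd x y) = dadd (st x) (st y)) \<and>
     (\<forall>x\<in>Dset G. \<forall>y\<in>Dset G. st (dmul G \<Phi> x y) = dmul G \<Phi> (st y) (st x)) \<and>
     (\<forall>x\<in>Dset G. st (st x) = x)"

definition fD :: "'k::field dvec \<Rightarrow> 'k" where
  "fD c = c id"

text \<open>the restriction of the involution to K (meaningful since K^* is contained in K)\<close>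
definition kst :: "('k::field dvec \<Rightarrow> 'k dvec) \<Rightarrow> 'k \<Rightarrow> 'k" where
  "kst st k = fD (st (emb k))"

text \<open>a_sigma = e_sigma^* e_sigma, as an element of K\<close>
definition aa :: "('k::field \<Rightarrow> 'k) set \<Rightarrow> (('k \<Rightarrow> 'k) \<Rightarrow> ('k \<Rightarrow> 'k) \<Rightarrow> 'k)
    \<Rightarrow> ('k dvec \<Rightarrow> 'k dvec) \<Rightarrow> ('k \<Rightarrow> 'k) \<Rightarrow> 'k" where
  "aa G \<Phi> st \<sigma> = fD (dmul G \<Phi> (st (ebas \<sigma>)) (ebas \<sigma>))"

definition hcone :: "'a set \<Rightarrow> ('a \<Rightarrow> 'a \<Rightarrow> 'a) \<Rightarrow> ('a \<Rightarrow> 'a \<Rightarrow> 'a) \<Rightarrow> ('a \<Rightarrow> 'a)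
    \<Rightarrow> 'a \<Rightarrow> 'a \<Rightarrow> ('a \<Rightarrow> 'a) \<Rightarrow> 'a set \<Rightarrow> bool" where
  "hcone R add mul neg zero one st M \<longleftrightarrow>
     M \<subseteq> {r\<in>R. st r = r} \<and> one \<in> M \<and>
     (\<forall>x\<in>M. \<forall>y\<in>M. add x y \<in> M) \<and>
     (\<forall>a\<in>R. \<forall>x\<in>M. mul (mul a x) (st a) \<in> M) \<and>
     M \<inter> neg ` M = {zero}"

definition NN :: "('k::field \<Rightarrow> 'k) set \<Rightarrow> (('k \<Rightarrow> 'k) \<Rightarrow> ('k \<Rightarrow> 'k) \<Rightarrow> 'k)
    \<Rightarrow> ('k dvec \<Rightarrow> 'k dvec) \<Rightarrow> 'k set set" where
  "NN G \<Phi> st = {N. hcone UNIV (+) (*) uminus 0 1 (kst st) N \<and> (\<forall>\<sigma>\<in>G. aa G \<Phi> st \<sigma> \<in> N)}"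

definition MM :: "('k::field \<Rightarrow> 'k) set \<Rightarrow> (('k \<Rightarrow> 'k) \<Rightarrow> ('k \<Rightarrow> 'k) \<Rightarrow> 'k)
    \<Rightarrow> ('k dvec \<Rightarrow> 'k dvec) \<Rightarrow> 'k dvec set set" where
  "MM G \<Phi> st = {M. hcone (Dset G) dadd (dmul G \<Phi>) dneg dzero done_D st M}"

definition Nsig :: "('k::field \<Rightarrow> 'k) set \<Rightarrow> (('k \<Rightarrow> 'k) \<Rightarrow> ('k \<Rightarrow> 'k) \<Rightarrow> 'k)
    \<Rightarrow> ('k dvec \<Rightarrow> 'k dvec) \<Rightarrow> 'k set \<Rightarrow> ('k \<Rightarrow> 'k) \<Rightarrow> 'k set" where
  "Nsig G \<Phi> st N \<sigma> = {k. aa G \<Phi> st \<sigma> * \<sigma> k \<in> N}"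

text \<open>lambda(a): a e_tau = sum_sigma e_sigma lambda(a)_(sigma,tau)\<close>
definition lam :: "('k::field \<Rightarrow> 'k) set \<Rightarrow> (('k \<Rightarrow> 'k) \<Rightarrow> ('k \<Rightarrow> 'k) \<Rightarrow> 'k)
    \<Rightarrow> 'k dvec \<Rightarrow> ('k \<Rightarrow> 'k) \<Rightarrow> ('k \<Rightarrow> 'k) \<Rightarrow> 'k" where
  "lam G \<Phi> c \<sigma> \<tau> = dmul G \<Phi> c (ebas \<tau>) \<sigma>"

definition contr :: "'k::field dvec set \<Rightarrow> 'k set" where
  "contr M = {k. emb k \<in> M}"

text \<open>extension N^e = {c. x^* A lambda(c) x in N for all x in K^n}, A = diag(a_sigma)\<close>
definition ext :: "('k::field \<Rightarrow> 'k) set \<Rightarrow> (('k \<Rightarrow> 'k) \<Rightarrow> ('k \<Rightarrow> 'k) \<Rightarrow> 'k)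
    \<Rightarrow> ('k dvec \<Rightarrow> 'k dvec) \<Rightarrow> 'k set \<Rightarrow> 'k dvec set" where
  "ext G \<Phi> st N = {c\<in>Dset G. \<forall>x :: ('k \<Rightarrow> 'k) \<Rightarrow> 'k.
      (\<Sum>\<sigma>\<in>G. \<Sum>\<tau>\<in>G. kst st (x \<sigma>) * aa G \<Phi> st \<sigma> * lam G \<Phi> c \<sigma> \<tau> * x \<tau>) \<in> N}"

end

theory Submission
  imports Defs
begin

(* The whole argument rests on two identities in D.  For d, u in D:
     (trace form)  f(d* u d) = sum_{sigma,tau} d_sigma^* a_sigma lambda(u)_{sigma tau} d_tau,
   so the quadratic form defining N^e is exactly d |-> f(d* u d); this is statement (1).
     (twist)       f((d e_sigma)* u (d e_sigma)) = a_sigma (f(d* u d))^sigma,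
   and since right multiplication by the unit e_sigma permutes D, (1) gives (N_sigma)^e = N^e,
   which is (3).  For k in K the matrix lambda(k) is diag(k^sigma), so k in N^e iff
   a_sigma k^sigma in N for all sigma; this is (2).  Since extension commutes with
   intersections, (2) and (3) give (4).  Finally e_sigma^* k e_sigma = a_sigma k^sigma in D and
   e_sigma is invertible, so a hermitian cone M of D satisfies (M^c)_sigma = M^c, which is (5);
   (6) follows from (2) and (5). *)

lemma sum_single:
  "finite A \<Longrightarrow> a \<in> A \<Longrightarrow> (\<And>x. x \<in> A \<Longrightarrow> x \<noteq> a \<Longrightarrow> f x = 0) \<Longrightarrow> sum f A = f a"
  by (subst sum.remove[of A a]) (auto intro!: sum.neutral)

lemma sum_closed:
  assumes "finite A" "0 \<in> N" "\<forall>a\<in>N. \<forall>b\<in>N. a + b \<in> N" "\<And>i. i \<in> A \<Longrightarrow> f i \<in> N"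
  shows "sum f A \<in> N"
  using assms(1,4) by (induction A rule: finite_induct) (auto simp: assms(2,3))

section \<open>The crossed product as an associative algebra\<close>

locale crossed_product =
  fixes G :: "('k::field \<Rightarrow> 'k) set"
    and \<Phi> :: "('k \<Rightarrow> 'k) \<Rightarrow> ('k \<Rightarrow> 'k) \<Rightarrow> 'k"
  assumes galois: "galois_group G"
    and cocycle: "normalized_cocycle G \<Phi>"
begin

abbreviation mul (infixl "\<cdot>" 70) where "mul \<equiv> dmul G \<Phi>"

lemma finG: "finite G" using galois by (simp add: galois_group_def)
lemma idG: "id \<in> G" using galois by (simp add: galois_group_def)
lemma gmulG: "\<sigma> \<in> G \<Longrightarrow> \<tau> \<in> G \<Longrightarrow> gmul \<sigma> \<tau> \<in> G" using galois by (simp add: galois_group_def)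
lemma invG: "\<sigma> \<in> G \<Longrightarrow> inv \<sigma> \<in> G" using galois by (simp add: galois_group_def)
lemma bijG: "\<sigma> \<in> G \<Longrightarrow> bij \<sigma>" using galois by (simp add: galois_group_def)

lemma aut_add: "\<sigma> \<in> G \<Longrightarrow> \<sigma> (x + y) = \<sigma> x + \<sigma> y" using galois by (simp add: galois_group_def)
lemma aut_mult: "\<sigma> \<in> G \<Longrightarrow> \<sigma> (x * y) = \<sigma> x * \<sigma> y" using galois by (simp add: galois_group_def)
lemma aut_one: "\<sigma> \<in> G \<Longrightarrow> \<sigma> 1 = 1" using galois by (simp add: galois_group_def)

lemma aut_zero: "\<sigma> \<in> G \<Longrightarrow> \<sigma> 0 = 0"
  using aut_add[of \<sigma> 0 0] by (metis add_cancel_right_right)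

lemma aut_sum: "\<sigma> \<in> G \<Longrightarrow> \<sigma> (\<Sum>i\<in>A. f i) = (\<Sum>i\<in>A. \<sigma> (f i))"
  using sum_comp_morphism[of \<sigma> f A] by (simp add: aut_zero aut_add comp_def)

lemma aut_inj: "\<sigma> \<in> G \<Longrightarrow> \<sigma> x = \<sigma> y \<Longrightarrow> x = y"
  using bijG bij_is_inj by (metis injD)

lemma aut_eq_0: "\<sigma> \<in> G \<Longrightarrow> \<sigma> x = 0 \<longleftrightarrow> x = 0"
  using aut_inj aut_zero by metis

lemma gmul_assoc: "gmul (gmul a b) c = gmul a (gmul b c)" by (simp add: gmul_def o_assoc)
lemma gmul_apply: "gmul a b x = b (a x)" by (simp add: gmul_def)
lemma gmul_id[simp]: "gmul id a = a" "gmul a id = a" by (auto simp: gmul_def)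

lemma gmul_cancel_right: "\<sigma> \<in> G \<Longrightarrow> gmul \<alpha> \<sigma> = gmul \<beta> \<sigma> \<Longrightarrow> \<alpha> = \<beta>"
  unfolding gmul_def by (rule ext) (metis aut_inj comp_apply)

lemma gmul_cancel_left: "\<sigma> \<in> G \<Longrightarrow> gmul \<sigma> \<alpha> = gmul \<sigma> \<beta> \<Longrightarrow> \<alpha> = \<beta>"
  unfolding gmul_def using bijG bij_is_surj by (metis fun.map_comp comp_id surj_iff)

lemma gmul_inv_left: "\<sigma> \<in> G \<Longrightarrow> gmul (inv \<sigma>) \<sigma> = id"
  unfolding gmul_def by (metis bijG bij_is_surj surj_iff)

lemma Phi_nonzero: "\<sigma> \<in> G \<Longrightarrow> \<tau> \<in> G \<Longrightarrow> \<Phi> \<sigma> \<tau> \<noteq> 0"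
  using cocycle by (simp add: normalized_cocycle_def)
lemma Phi_id: "\<sigma> \<in> G \<Longrightarrow> \<Phi> id \<sigma> = 1" "\<sigma> \<in> G \<Longrightarrow> \<Phi> \<sigma> id = 1"
  using cocycle by (auto simp: normalized_cocycle_def)
lemma Phi_cocycle: "\<sigma> \<in> G \<Longrightarrow> \<tau> \<in> G \<Longrightarrow> \<rho> \<in> G \<Longrightarrow>
    \<Phi> (gmul \<sigma> \<tau>) \<rho> * \<rho> (\<Phi> \<sigma> \<tau>) = \<Phi> \<sigma> (gmul \<tau> \<rho>) * \<Phi> \<tau> \<rho>"
  using cocycle by (simp add: normalized_cocycle_def)

lemma Dset_out: "c \<in> Dset G \<Longrightarrow> \<rho> \<notin> G \<Longrightarrow> c \<rho> = 0" by (simp add: Dset_def)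
lemma dmul_Dset: "c \<cdot> d \<in> Dset G"
  unfolding Dset_def dmul_def using gmulG by (auto intro!: sum.neutral)
lemma emb_Dset: "emb k \<in> Dset G" using idG by (auto simp: Dset_def emb_def)
lemma ebas_Dset: "\<sigma> \<in> G \<Longrightarrow> ebas \<sigma> \<in> Dset G" by (auto simp: Dset_def ebas_def)
lemma dzero_Dset: "dzero \<in> Dset G" by (auto simp: Dset_def dzero_def)
lemma done_Dset: "done_D \<in> Dset G" by (simp add: done_D_def emb_Dset)

text \<open>Associativity: both (c d) e and c (d e) expand to a triple sum over G; their terms
  agree by the cocycle identity.\<close>

lemma dmul_assoc_expand_left:
  "((c \<cdot> d) \<cdot> e) \<rho> = (\<Sum>\<sigma>\<in>G. \<Sum>\<tau>\<in>G. \<Sum>\<gamma>\<in>G. if gmul (gmul \<sigma> \<tau>) \<gamma> = \<rho>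
      then \<Phi> (gmul \<sigma> \<tau>) \<gamma> * \<gamma> (\<Phi> \<sigma> \<tau>) * \<gamma> (\<tau> (c \<sigma>)) * \<gamma> (d \<tau>) * e \<gamma> else 0)"
proof -
  have "((c \<cdot> d) \<cdot> e) \<rho> = (\<Sum>\<alpha>\<in>G. \<Sum>\<gamma>\<in>G. \<Sum>\<sigma>\<in>G. \<Sum>\<tau>\<in>G. if gmul \<sigma> \<tau> = \<alpha> then
      (if gmul \<alpha> \<gamma> = \<rho> then \<Phi> \<alpha> \<gamma> * \<gamma> (\<Phi> \<sigma> \<tau>) * \<gamma> (\<tau> (c \<sigma>)) * \<gamma> (d \<tau>) * e \<gamma> else 0) else 0)"
    unfolding dmul_def
  proof (intro sum.cong refl)
    fix \<alpha> \<gamma> assume \<gamma>: "\<gamma> \<in> G"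
    show "(if gmul \<alpha> \<gamma> = \<rho> then \<Phi> \<alpha> \<gamma> * \<gamma> (\<Sum>\<sigma>\<in>G. \<Sum>\<tau>\<in>G. if gmul \<sigma> \<tau> = \<alpha>
          then \<Phi> \<sigma> \<tau> * \<tau> (c \<sigma>) * d \<tau> else 0) * e \<gamma> else 0)
      = (\<Sum>\<sigma>\<in>G. \<Sum>\<tau>\<in>G. if gmul \<sigma> \<tau> = \<alpha> then (if gmul \<alpha> \<gamma> = \<rho>
          then \<Phi> \<alpha> \<gamma> * \<gamma> (\<Phi> \<sigma> \<tau>) * \<gamma> (\<tau> (c \<sigma>)) * \<gamma> (d \<tau>) * e \<gamma> else 0) else 0)"
    proof (cases "gmul \<alpha> \<gamma> = \<rho>")
      case True
      then show ?thesis
        by (simp add: aut_sum[OF \<gamma>] aut_mult[OF \<gamma>] aut_zero[OF \<gamma>] sum_distrib_left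
            sum_distrib_right mult.assoc cong: if_cong) (auto simp: aut_zero[OF \<gamma>] aut_mult[OF \<gamma>] intro!: sum.cong)
    qed (simp cong: if_cong)
  qed
  also have "\<dots> = (\<Sum>\<gamma>\<in>G. \<Sum>\<sigma>\<in>G. \<Sum>\<tau>\<in>G. \<Sum>\<alpha>\<in>G. if gmul \<sigma> \<tau> = \<alpha> then
      (if gmul \<alpha> \<gamma> = \<rho> then \<Phi> \<alpha> \<gamma> * \<gamma> (\<Phi> \<sigma> \<tau>) * \<gamma> (\<tau> (c \<sigma>)) * \<gamma> (d \<tau>) * e \<gamma> else 0) else 0)"
    by (rule trans[OF sum.swap], rule sum.cong[OF refl], rule trans[OF sum.swap],
        rule sum.cong[OF refl], rule sum.swap)
  also have "\<dots> = (\<Sum>\<gamma>\<in>G. \<Sum>\<sigma>\<in>G. \<Sum>\<tau>\<in>G. if gmul (gmul \<sigma> \<tau>) \<gamma> = \<rho>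
      then \<Phi> (gmul \<sigma> \<tau>) \<gamma> * \<gamma> (\<Phi> \<sigma> \<tau>) * \<gamma> (\<tau> (c \<sigma>)) * \<gamma> (d \<tau>) * e \<gamma> else 0)"
    by (intro sum.cong refl) (simp add: finG gmulG cong: if_cong)
  also have "\<dots> = (\<Sum>\<sigma>\<in>G. \<Sum>\<tau>\<in>G. \<Sum>\<gamma>\<in>G. if gmul (gmul \<sigma> \<tau>) \<gamma> = \<rho>
      then \<Phi> (gmul \<sigma> \<tau>) \<gamma> * \<gamma> (\<Phi> \<sigma> \<tau>) * \<gamma> (\<tau> (c \<sigma>)) * \<gamma> (d \<tau>) * e \<gamma> else 0)"
    by (rule trans[OF sum.swap], rule sum.cong[OF refl], rule sum.swap)
  finally show ?thesis .
qed

lemma dmul_assoc_expand_right: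
  "(c \<cdot> (d \<cdot> e)) \<rho> = (\<Sum>\<sigma>\<in>G. \<Sum>\<tau>\<in>G. \<Sum>\<gamma>\<in>G. if gmul \<sigma> (gmul \<tau> \<gamma>) = \<rho>
      then \<Phi> \<sigma> (gmul \<tau> \<gamma>) * \<Phi> \<tau> \<gamma> * \<gamma> (\<tau> (c \<sigma>)) * \<gamma> (d \<tau>) * e \<gamma> else 0)"
proof -
  have "(c \<cdot> (d \<cdot> e)) \<rho> = (\<Sum>\<sigma>\<in>G. \<Sum>\<beta>\<in>G. \<Sum>\<tau>\<in>G. \<Sum>\<gamma>\<in>G. if gmul \<tau> \<gamma> = \<beta> then
      (if gmul \<sigma> \<beta> = \<rho> then \<Phi> \<sigma> \<beta> * \<beta> (c \<sigma>) * (\<Phi> \<tau> \<gamma> * \<gamma> (d \<tau>) * e \<gamma>) else 0) else 0)"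
    unfolding dmul_def
  proof (intro sum.cong refl)
    fix \<sigma> \<beta>
    show "(if gmul \<sigma> \<beta> = \<rho> then \<Phi> \<sigma> \<beta> * \<beta> (c \<sigma>) * (\<Sum>\<tau>\<in>G. \<Sum>\<gamma>\<in>G. if gmul \<tau> \<gamma> = \<beta>
          then \<Phi> \<tau> \<gamma> * \<gamma> (d \<tau>) * e \<gamma> else 0) else 0)
      = (\<Sum>\<tau>\<in>G. \<Sum>\<gamma>\<in>G. if gmul \<tau> \<gamma> = \<beta> then (if gmul \<sigma> \<beta> = \<rho>
          then \<Phi> \<sigma> \<beta> * \<beta> (c \<sigma>) * (\<Phi> \<tau> \<gamma> * \<gamma> (d \<tau>) * e \<gamma>) else 0) else 0)"
      by (cases "gmul \<sigma> \<beta> = \<rho>")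
        (simp_all add: sum_distrib_left cong: if_cong, auto intro!: sum.cong)
  qed
  also have "\<dots> = (\<Sum>\<sigma>\<in>G. \<Sum>\<tau>\<in>G. \<Sum>\<gamma>\<in>G. \<Sum>\<beta>\<in>G. if gmul \<tau> \<gamma> = \<beta> then
      (if gmul \<sigma> \<beta> = \<rho> then \<Phi> \<sigma> \<beta> * \<beta> (c \<sigma>) * (\<Phi> \<tau> \<gamma> * \<gamma> (d \<tau>) * e \<gamma>) else 0) else 0)"
    by (rule sum.cong[OF refl], rule trans[OF sum.swap], rule sum.cong[OF refl], rule sum.swap)
  also have "\<dots> = (\<Sum>\<sigma>\<in>G. \<Sum>\<tau>\<in>G. \<Sum>\<gamma>\<in>G. if gmul \<sigma> (gmul \<tau> \<gamma>) = \<rho>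
      then \<Phi> \<sigma> (gmul \<tau> \<gamma>) * \<Phi> \<tau> \<gamma> * \<gamma> (\<tau> (c \<sigma>)) * \<gamma> (d \<tau>) * e \<gamma> else 0)"
    by (intro sum.cong refl) (simp add: finG gmulG gmul_apply mult_ac cong: if_cong)
  finally show ?thesis .
qed

lemma dmul_assoc: "(c \<cdot> d) \<cdot> e = c \<cdot> (d \<cdot> e)"
proof
  fix \<rho>
  show "((c \<cdot> d) \<cdot> e) \<rho> = (c \<cdot> (d \<cdot> e)) \<rho>"
    unfolding dmul_assoc_expand_left dmul_assoc_expand_right
    by (intro sum.cong refl) (simp add: Phi_cocycle gmul_assoc)
qed

lemma dmul_ebas_right:
  "\<tau> \<in> G \<Longrightarrow> (u \<cdot> ebas \<tau>) \<rho> = (\<Sum>\<alpha>\<in>G. if gmul \<alpha> \<tau> = \<rho> then \<Phi> \<alpha> \<tau> * \<tau> (u \<alpha>) else 0)"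
  unfolding dmul_def by (intro sum.cong refl, subst sum_single[of G \<tau>]) (auto simp: finG ebas_def)

lemma emb_dmul: "c \<in> Dset G \<Longrightarrow> emb k \<cdot> c = (\<lambda>\<rho>. \<rho> k * c \<rho>)"
proof
  fix \<rho> assume c: "c \<in> Dset G"
  have "(emb k \<cdot> c) \<rho> = (\<Sum>\<tau>\<in>G. if gmul id \<tau> = \<rho> then \<Phi> id \<tau> * \<tau> (emb k id) * c \<tau> else 0)"
    unfolding dmul_def by (rule sum_single[OF finG idG]) (auto simp: emb_def aut_zero intro!: sum.neutral)
  also have "\<dots> = (\<Sum>\<tau>\<in>G. if \<tau> = \<rho> then \<tau> k * c \<tau> else 0)"
    by (intro sum.cong refl) (auto simp: emb_def Phi_id)
  also have "\<dots> = \<rho> k * c \<rho>" using Dset_out[OF c] by (cases "\<rho> \<in> G") (auto simp: finG)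
  finally show "(emb k \<cdot> c) \<rho> = \<rho> k * c \<rho>" .
qed

lemma dmul_emb: "c \<in> Dset G \<Longrightarrow> c \<cdot> emb k = (\<lambda>\<rho>. c \<rho> * k)"
proof
  fix \<rho> assume c: "c \<in> Dset G"
  have "(c \<cdot> emb k) \<rho> = (\<Sum>\<sigma>\<in>G. if gmul \<sigma> id = \<rho> then \<Phi> \<sigma> id * id (c \<sigma>) * emb k id else 0)"
    unfolding dmul_def by (intro sum.cong refl, rule sum_single[OF finG idG]) (auto simp: emb_def)
  also have "\<dots> = (\<Sum>\<sigma>\<in>G. if \<sigma> = \<rho> then c \<sigma> * k else 0)"
    by (intro sum.cong refl) (auto simp: emb_def Phi_id)
  also have "\<dots> = c \<rho> * k" using Dset_out[OF c] by (cases "\<rho> \<in> G") (auto simp: finG)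
  finally show "(c \<cdot> emb k) \<rho> = c \<rho> * k" .
qed

lemma emb_emb: "emb a \<cdot> emb b = emb (a * b)"
  unfolding emb_dmul[OF emb_Dset] by (auto simp: emb_def fun_eq_iff)
lemma done_left: "x \<in> Dset G \<Longrightarrow> done_D \<cdot> x = x"
  unfolding done_D_def emb_dmul by (rule ext) (metis Dset_out mult_1 mult_zero_right aut_one)
lemma done_right: "x \<in> Dset G \<Longrightarrow> x \<cdot> done_D = x"
  by (simp add: done_D_def dmul_emb)
lemma emb_inj: "emb a = emb b \<Longrightarrow> a = b" by (metis emb_def)
lemma emb_zero: "emb 0 = dzero" by (rule ext) (simp add: emb_def dzero_def)
lemma emb_add: "emb (a + b) = dadd (emb a) (emb b)" by (rule ext) (simp add: emb_def dadd_def)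
lemma fD_emb: "fD (emb a) = a" by (simp add: fD_def emb_def)
lemma fD_emb_dmul: "c \<in> Dset G \<Longrightarrow> fD (emb k \<cdot> c) = k * fD c"
  by (simp add: emb_dmul fD_def)

lemma emb_ebas_coord: "\<sigma> \<in> G \<Longrightarrow> emb k \<cdot> ebas \<sigma> = (\<lambda>\<rho>. if \<rho> = \<sigma> then \<sigma> k else 0)"
  unfolding emb_dmul[OF ebas_Dset] by (auto simp: ebas_def fun_eq_iff)

lemma ebas_emb_coord: "\<sigma> \<in> G \<Longrightarrow> ebas \<sigma> \<cdot> emb k = (\<lambda>\<rho>. if \<rho> = \<sigma> then k else 0)"
  unfolding dmul_emb[OF ebas_Dset] by (auto simp: ebas_def fun_eq_iff)

lemma emb_ebas: "\<sigma> \<in> G \<Longrightarrow> emb k \<cdot> ebas \<sigma> = ebas \<sigma> \<cdot> emb (\<sigma> k)"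
  by (simp add: emb_ebas_coord ebas_emb_coord)

lemma dmul_ebas_coeff: "\<sigma> \<in> G \<Longrightarrow> (y \<cdot> ebas \<sigma>) \<sigma> = \<sigma> (fD y)"
proof -
  assume s: "\<sigma> \<in> G"
  have "(y \<cdot> ebas \<sigma>) \<sigma> = (\<Sum>\<alpha>\<in>G. if \<alpha> = id then \<Phi> \<alpha> \<sigma> * \<sigma> (y \<alpha>) else 0)"
    unfolding dmul_ebas_right[OF s] by (intro sum.cong refl) (metis gmul_cancel_right[OF s] gmul_id(1))
  also have "\<dots> = \<sigma> (fD y)" using idG s by (simp add: finG Phi_id fD_def)
  finally show ?thesis .
qed

lemma dmul_lam: "(u \<cdot> d) \<sigma> = (\<Sum>\<tau>\<in>G. lam G \<Phi> u \<sigma> \<tau> * d \<tau>)"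
proof -
  have "(u \<cdot> d) \<sigma> = (\<Sum>\<tau>\<in>G. \<Sum>\<alpha>\<in>G. if gmul \<alpha> \<tau> = \<sigma> then \<Phi> \<alpha> \<tau> * \<tau> (u \<alpha>) * d \<tau> else 0)"
    unfolding dmul_def by (rule sum.swap)
  also have "\<dots> = (\<Sum>\<tau>\<in>G. lam G \<Phi> u \<sigma> \<tau> * d \<tau>)"
    by (intro sum.cong refl) (auto simp: lam_def dmul_ebas_right sum_distrib_right intro!: sum.cong)
  finally show ?thesis .
qed

lemma lam_emb: "\<sigma> \<in> G \<Longrightarrow> \<tau> \<in> G \<Longrightarrow> lam G \<Phi> (emb k) \<sigma> \<tau> = (if \<sigma> = \<tau> then \<sigma> k else 0)"
  by (simp add: lam_def emb_ebas_coord)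

definition dsum :: "'i set \<Rightarrow> ('i \<Rightarrow> 'k dvec) \<Rightarrow> 'k dvec" where
  "dsum A f = (\<lambda>\<rho>. \<Sum>i\<in>A. f i \<rho>)"

lemma dsum_Dset: "(\<And>i. i \<in> A \<Longrightarrow> f i \<in> Dset G) \<Longrightarrow> dsum A f \<in> Dset G"
  by (auto simp: dsum_def Dset_def intro!: sum.neutral)

lemma dsum_dmul: "dsum A f \<cdot> z = dsum A (\<lambda>i. f i \<cdot> z)"
proof
  fix \<rho>
  have "(dsum A f \<cdot> z) \<rho> = (\<Sum>\<sigma>\<in>G. \<Sum>\<tau>\<in>G. \<Sum>i\<in>A.
      if gmul \<sigma> \<tau> = \<rho> then \<Phi> \<sigma> \<tau> * \<tau> (f i \<sigma>) * z \<tau> else 0)"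
    unfolding dsum_def dmul_def
    by (intro sum.cong refl) (auto simp: aut_sum sum_distrib_left sum_distrib_right)
  also have "\<dots> = dsum A (\<lambda>i. f i \<cdot> z) \<rho>"
    unfolding dsum_def dmul_def
    by (rule trans[OF sum.cong[OF refl sum.swap]], rule sum.swap)
  finally show "(dsum A f \<cdot> z) \<rho> = dsum A (\<lambda>i. f i \<cdot> z) \<rho>" .
qed

lemma fD_dsum: "fD (dsum A f) = (\<Sum>i\<in>A. fD (f i))" by (simp add: fD_def dsum_def)

lemma ebas_decomp: "d \<in> Dset G \<Longrightarrow> d = dsum G (\<lambda>\<sigma>. ebas \<sigma> \<cdot> emb (d \<sigma>))"
proof (rule ext)
  fix \<rho> assume d: "d \<in> Dset G"
  have "dsum G (\<lambda>\<sigma>. ebas \<sigma> \<cdot> emb (d \<sigma>)) \<rho> = (\<Sum>\<sigma>\<in>G. if \<rho> = \<sigma> then d \<sigma> else 0)"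
    unfolding dsum_def by (intro sum.cong refl) (simp add: ebas_emb_coord)
  also have "\<dots> = d \<rho>" using Dset_out[OF d] by (cases "\<rho> \<in> G") (auto simp: finG)
  finally show "d \<rho> = dsum G (\<lambda>\<sigma>. ebas \<sigma> \<cdot> emb (d \<sigma>)) \<rho>" by simp
qed

end

section \<open>Crossed products with an involution\<close>

locale involutive_crossed_product = crossed_product G \<Phi>
  for G :: "('k::field \<Rightarrow> 'k) set" and \<Phi> +
  fixes st :: "'k dvec \<Rightarrow> 'k dvec"
  assumes division: "division_algebra G \<Phi>"
    and invol: "involution G \<Phi> st"
    and K_stable: "\<forall>k. st (emb k) \<in> range emb"
    and a_in_K: "\<forall>\<sigma>\<in>G. st (ebas \<sigma>) \<cdot> ebas \<sigma> \<in> range emb"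
begin

lemma st_Dset: "x \<in> Dset G \<Longrightarrow> st x \<in> Dset G" using invol by (simp add: involution_def)
lemma st_add: "x \<in> Dset G \<Longrightarrow> y \<in> Dset G \<Longrightarrow> st (dadd x y) = dadd (st x) (st y)"
  using invol by (simp add: involution_def)
lemma st_mul: "x \<in> Dset G \<Longrightarrow> y \<in> Dset G \<Longrightarrow> st (x \<cdot> y) = st y \<cdot> st x"
  using invol by (simp add: involution_def)
lemma st_st: "x \<in> Dset G \<Longrightarrow> st (st x) = x" using invol by (simp add: involution_def)

lemma st_zero: "st dzero = dzero"
proof
  fix \<rho>
  have "st dzero = dadd (st dzero) (st dzero)"
    using st_add[OF dzero_Dset dzero_Dset] by (simp add: dadd_def dzero_def)
  hence "st dzero \<rho> = st dzero \<rho> + st dzero \<rho>" unfolding dadd_def by (rule fun_cong)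
  thus "st dzero \<rho> = dzero \<rho>" by (simp only: dzero_def add_cancel_right_right)
qed

lemma st_one: "st done_D = done_D"
proof -
  have "st (done_D \<cdot> st done_D) = done_D \<cdot> st done_D"
    by (simp add: st_mul st_Dset done_Dset st_st)
  thus ?thesis by (simp add: done_left st_Dset done_Dset st_st)
qed

lemma st_emb: "st (emb k) = emb (kst st k)"
proof -
  obtain j where "st (emb k) = emb j" using K_stable by blast
  thus ?thesis by (simp add: kst_def fD_emb)
qed
lemma kst_kst: "kst st (kst st k) = k"
  by (metis st_emb st_st emb_Dset emb_inj)
lemma kst_one: "kst st 1 = 1" by (metis st_emb st_one done_D_def emb_inj)

lemma aa_emb:
  assumes s: "\<sigma> \<in> G" shows "st (ebas \<sigma>) \<cdot> ebas \<sigma> = emb (aa G \<Phi> st \<sigma>)"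
proof -
  obtain j where "st (ebas \<sigma>) \<cdot> ebas \<sigma> = emb j" using a_in_K s by blast
  thus ?thesis by (simp add: aa_def fD_emb)
qed

text \<open>Since e_sigma^* e_sigma lies in K, the element e_sigma^* is supported at the
  inverse of sigma alone.\<close>
lemma st_ebas_support:
  assumes s: "\<sigma> \<in> G" and a: "\<alpha> \<noteq> inv \<sigma>" shows "st (ebas \<sigma>) \<alpha> = 0"
proof (cases "\<alpha> \<in> G")
  case False thus ?thesis using Dset_out st_Dset ebas_Dset s by blast
next
  case True
  let ?w = "st (ebas \<sigma>)"
  have ne: "gmul \<alpha> \<sigma> \<noteq> id" using gmul_cancel_right[OF s, of \<alpha> "inv \<sigma>"] gmul_inv_left[OF s] a by auto
  have "(?w \<cdot> ebas \<sigma>) (gmul \<alpha> \<sigma>) = (\<Sum>\<alpha>'\<in>G. if \<alpha>' = \<alpha> then \<Phi> \<alpha>' \<sigma> * \<sigma> (?w \<alpha>') else 0)"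
    unfolding dmul_ebas_right[OF s] by (intro sum.cong refl) (metis gmul_cancel_right[OF s])
  also have "\<dots> = \<Phi> \<alpha> \<sigma> * \<sigma> (?w \<alpha>)" using True by (simp add: finG)
  finally have "\<Phi> \<alpha> \<sigma> * \<sigma> (?w \<alpha>) = 0" using ne by (simp add: aa_emb[OF s] emb_def)
  thus ?thesis using Phi_nonzero[OF True s] aut_eq_0[OF s] by simp
qed

lemma fD_st_ebas: assumes s: "\<sigma> \<in> G" shows "fD (st (ebas \<sigma>) \<cdot> z) = aa G \<Phi> st \<sigma> * z \<sigma>"
proof -
  let ?w = "st (ebas \<sigma>)"
  have coeff: "fD (?w \<cdot> y) = \<Phi> (inv \<sigma>) \<sigma> * \<sigma> (?w (inv \<sigma>)) * y \<sigma>" for y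
  proof -
    have "fD (?w \<cdot> y) = (\<Sum>\<beta>\<in>G. if gmul (inv \<sigma>) \<beta> = id then \<Phi> (inv \<sigma>) \<beta> * \<beta> (?w (inv \<sigma>)) * y \<beta> else 0)"
      unfolding fD_def dmul_def
      by (rule sum_single[OF finG invG[OF s]]) (auto simp: st_ebas_support[OF s] aut_zero intro!: sum.neutral)
    also have "\<dots> = (\<Sum>\<beta>\<in>G. if \<beta> = \<sigma> then \<Phi> (inv \<sigma>) \<beta> * \<beta> (?w (inv \<sigma>)) * y \<beta> else 0)"
      by (intro sum.cong refl) (metis gmul_cancel_left[OF invG[OF s]] gmul_inv_left[OF s])
    finally show ?thesis using s by (simp add: finG)
  qed
  have "aa G \<Phi> st \<sigma> = \<Phi> (inv \<sigma>) \<sigma> * \<sigma> (?w (inv \<sigma>))"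
    using coeff[of "ebas \<sigma>"] by (simp add: aa_def ebas_def)
  thus ?thesis by (simp add: coeff)
qed

lemma st_dsum:
  "finite A \<Longrightarrow> (\<And>i. i \<in> A \<Longrightarrow> f i \<in> Dset G) \<Longrightarrow> st (dsum A f) = dsum A (\<lambda>i. st (f i))"
proof (induction A rule: finite_induct)
  case empty show ?case by (simp add: dsum_def st_zero[unfolded dzero_def])
next
  case (insert x A)
  have "dsum (insert x A) f = dadd (f x) (dsum A f)" for f :: "_ \<Rightarrow> 'k dvec"
    using insert(1,2) by (simp add: dsum_def dadd_def)
  with insert show ?case by (simp add: st_add dsum_Dset)
qed

lemma fD_st_dmul:
  assumes d: "d \<in> Dset G"
  shows "fD (st d \<cdot> z) = (\<Sum>\<sigma>\<in>G. kst st (d \<sigma>) * aa G \<Phi> st \<sigma> * z \<sigma>)"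
proof -
  have "st d = dsum G (\<lambda>\<sigma>. emb (kst st (d \<sigma>)) \<cdot> st (ebas \<sigma>))"
    by (subst ebas_decomp[OF d], subst st_dsum[OF finG])
      (auto simp: dmul_Dset st_mul ebas_Dset emb_Dset st_emb dsum_def)
  hence "fD (st d \<cdot> z) = (\<Sum>\<sigma>\<in>G. fD (emb (kst st (d \<sigma>)) \<cdot> (st (ebas \<sigma>) \<cdot> z)))"
    by (simp add: dsum_dmul fD_dsum dmul_assoc)
  thus ?thesis by (simp add: fD_emb_dmul dmul_Dset fD_st_ebas mult.assoc)
qed

lemma trace_form:
  assumes d: "d \<in> Dset G"
  shows "fD (st d \<cdot> u \<cdot> d)
       = (\<Sum>\<sigma>\<in>G. \<Sum>\<tau>\<in>G. kst st (d \<sigma>) * aa G \<Phi> st \<sigma> * lam G \<Phi> u \<sigma> \<tau> * d \<tau>)"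
  by (simp add: dmul_assoc fD_st_dmul[OF d] dmul_lam sum_distrib_left mult.assoc)

lemma trace_form_twist:
  assumes s: "\<sigma> \<in> G" and d: "d \<in> Dset G"
  shows "fD (st (d \<cdot> ebas \<sigma>) \<cdot> u \<cdot> (d \<cdot> ebas \<sigma>)) = aa G \<Phi> st \<sigma> * \<sigma> (fD (st d \<cdot> u \<cdot> d))"
proof -
  have "st (d \<cdot> ebas \<sigma>) \<cdot> u \<cdot> (d \<cdot> ebas \<sigma>) = st (ebas \<sigma>) \<cdot> ((st d \<cdot> u \<cdot> d) \<cdot> ebas \<sigma>)"
    by (simp add: st_mul d ebas_Dset[OF s] dmul_assoc)
  thus ?thesis by (simp add: fD_st_ebas[OF s] dmul_ebas_coeff[OF s])
qed

lemma ebas_unit: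
  assumes s: "\<sigma> \<in> G"
  obtains v where "v \<in> Dset G" "ebas \<sigma> \<cdot> v = done_D" "v \<cdot> ebas \<sigma> = done_D"
proof -
  have "ebas \<sigma> \<noteq> dzero" by (metis ebas_def dzero_def zero_neq_one)
  thus ?thesis using division ebas_Dset[OF s] that unfolding division_algebra_def by blast
qed

lemma conj_ebas_emb:
  assumes s: "\<sigma> \<in> G"
  shows "st (ebas \<sigma>) \<cdot> emb k \<cdot> ebas \<sigma> = emb (aa G \<Phi> st \<sigma> * \<sigma> k)"
proof -
  have "st (ebas \<sigma>) \<cdot> emb k \<cdot> ebas \<sigma> = st (ebas \<sigma>) \<cdot> ebas \<sigma> \<cdot> emb (\<sigma> k)"
    by (simp add: dmul_assoc emb_ebas[OF s])
  thus ?thesis by (simp add: aa_emb[OF s] emb_emb)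
qed

section \<open>Extension and contraction\<close>

lemma ext_trace_form:
  "ext G \<Phi> st N = {u\<in>Dset G. \<forall>d\<in>Dset G. fD (st d \<cdot> u \<cdot> d) \<in> N}"
proof (rule set_eqI, rule iffI)
  fix u assume "u \<in> ext G \<Phi> st N"
  thus "u \<in> {u\<in>Dset G. \<forall>d\<in>Dset G. fD (st d \<cdot> u \<cdot> d) \<in> N}"
    by (simp add: ext_def trace_form)
next
  fix u assume u: "u \<in> {u\<in>Dset G. \<forall>d\<in>Dset G. fD (st d \<cdot> u \<cdot> d) \<in> N}"
  show "u \<in> ext G \<Phi> st N" unfolding ext_def
  proof (intro CollectI conjI allI)
    show "u \<in> Dset G" using u by simp
    fix x :: "('k \<Rightarrow> 'k) \<Rightarrow> 'k"
    \<comment> \<open>only the coordinates of x indexed by G matter, so x may be read as an element of D\<close>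
    define d where "d = (\<lambda>\<rho>. if \<rho> \<in> G then x \<rho> else 0)"
    have d: "d \<in> Dset G" by (simp add: d_def Dset_def)
    have "(\<Sum>\<sigma>\<in>G. \<Sum>\<tau>\<in>G. kst st (x \<sigma>) * aa G \<Phi> st \<sigma> * lam G \<Phi> u \<sigma> \<tau> * x \<tau>)
        = fD (st d \<cdot> u \<cdot> d)"
      by (simp add: trace_form[OF d]) (simp add: d_def)
    thus "(\<Sum>\<sigma>\<in>G. \<Sum>\<tau>\<in>G. kst st (x \<sigma>) * aa G \<Phi> st \<sigma> * lam G \<Phi> u \<sigma> \<tau> * x \<tau>) \<in> N"
      using u d by simp
  qed
qed

lemma ext_INT: "ext G \<Phi> st (\<Inter>\<sigma>\<in>G. A \<sigma>) = (\<Inter>\<sigma>\<in>G. ext G \<Phi> st (A \<sigma>))"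
  using idG unfolding ext_def by blast

text \<open>Statement (2), for any N containing 0 and closed under addition and under
  n |-> a^* n a; for k in K the trace form is diagonal: sum_sigma x_sigma^* a_sigma k^sigma x_sigma.\<close>
lemma contr_ext:
  assumes zero: "0 \<in> N" and add: "\<forall>a\<in>N. \<forall>b\<in>N. a + b \<in> N"
    and conj: "\<forall>a. \<forall>n\<in>N. kst st a * n * a \<in> N"
  shows "contr (ext G \<Phi> st N) = (\<Inter>\<sigma>\<in>G. Nsig G \<Phi> st N \<sigma>)"
proof -
  have diag: "(\<Sum>\<sigma>\<in>G. \<Sum>\<tau>\<in>G. kst st (x \<sigma>) * aa G \<Phi> st \<sigma> * lam G \<Phi> (emb k) \<sigma> \<tau> * x \<tau>)
      = (\<Sum>\<sigma>\<in>G. kst st (x \<sigma>) * (aa G \<Phi> st \<sigma> * \<sigma> k) * x \<sigma>)" for k x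
    by (intro sum.cong refl, subst sum_single[OF finG]) (auto simp: lam_emb)
  have "k \<in> contr (ext G \<Phi> st N) \<longleftrightarrow> (\<forall>x. (\<Sum>\<sigma>\<in>G. kst st (x \<sigma>) * (aa G \<Phi> st \<sigma> * \<sigma> k) * x \<sigma>) \<in> N)" for k
    by (simp add: contr_def ext_def emb_Dset diag)
  also have "\<dots> k \<longleftrightarrow> (\<forall>\<sigma>\<in>G. aa G \<Phi> st \<sigma> * \<sigma> k \<in> N)" for k
  proof
    assume h: "\<forall>x. (\<Sum>\<sigma>\<in>G. kst st (x \<sigma>) * (aa G \<Phi> st \<sigma> * \<sigma> k) * x \<sigma>) \<in> N"
    show "\<forall>\<sigma>\<in>G. aa G \<Phi> st \<sigma> * \<sigma> k \<in> N"
    proof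
      fix \<sigma> assume s: "\<sigma> \<in> G"
      have "(\<Sum>\<rho>\<in>G. kst st (ebas \<sigma> \<rho>) * (aa G \<Phi> st \<rho> * \<rho> k) * ebas \<sigma> \<rho>) = aa G \<Phi> st \<sigma> * \<sigma> k"
        by (subst sum_single[OF finG s]) (auto simp: ebas_def kst_one)
      thus "aa G \<Phi> st \<sigma> * \<sigma> k \<in> N" using h by metis
    qed
  next
    assume "\<forall>\<sigma>\<in>G. aa G \<Phi> st \<sigma> * \<sigma> k \<in> N"
    thus "\<forall>x. (\<Sum>\<sigma>\<in>G. kst st (x \<sigma>) * (aa G \<Phi> st \<sigma> * \<sigma> k) * x \<sigma>) \<in> N"
      using conj by (auto intro!: sum_closed[OF finG zero add])
  qed
  finally show ?thesis by (auto simp: Nsig_def)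
qed

text \<open>Statement (3): by the twist, f(d^* u d) lies in N_sigma iff f((d e_sigma)^* u (d e_sigma))
  lies in N, and d |-> d e_sigma is a bijection of D.\<close>
lemma ext_Nsig:
  assumes s: "\<sigma> \<in> G" shows "ext G \<Phi> st (Nsig G \<Phi> st N \<sigma>) = ext G \<Phi> st N"
proof -
  obtain v where v: "v \<in> Dset G" "ebas \<sigma> \<cdot> v = done_D" "v \<cdot> ebas \<sigma> = done_D"
    using ebas_unit[OF s] .
  have "(\<forall>d\<in>Dset G. fD (st d \<cdot> u \<cdot> d) \<in> Nsig G \<Phi> st N \<sigma>) \<longleftrightarrow>
        (\<forall>d\<in>Dset G. fD (st d \<cdot> u \<cdot> d) \<in> N)" for u
  proof
    assume h: "\<forall>d\<in>Dset G. fD (st d \<cdot> u \<cdot> d) \<in> Nsig G \<Phi> st N \<sigma>"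
    show "\<forall>d\<in>Dset G. fD (st d \<cdot> u \<cdot> d) \<in> N"
    proof
      fix d assume d: "d \<in> Dset G"
      have "d = (d \<cdot> v) \<cdot> ebas \<sigma>" by (simp add: dmul_assoc v done_right d)
      moreover have "aa G \<Phi> st \<sigma> * \<sigma> (fD (st (d \<cdot> v) \<cdot> u \<cdot> (d \<cdot> v))) \<in> N"
        using h dmul_Dset by (simp add: Nsig_def)
      ultimately show "fD (st d \<cdot> u \<cdot> d) \<in> N" by (metis trace_form_twist[OF s dmul_Dset])
    qed
  next
    assume h: "\<forall>d\<in>Dset G. fD (st d \<cdot> u \<cdot> d) \<in> N"
    show "\<forall>d\<in>Dset G. fD (st d \<cdot> u \<cdot> d) \<in> Nsig G \<Phi> st N \<sigma>"
    proof
      fix d assume d: "d \<in> Dset G"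
      have "fD (st (d \<cdot> ebas \<sigma>) \<cdot> u \<cdot> (d \<cdot> ebas \<sigma>)) \<in> N" using h dmul_Dset by blast
      thus "fD (st d \<cdot> u \<cdot> d) \<in> Nsig G \<Phi> st N \<sigma>" by (simp add: trace_form_twist[OF s d] Nsig_def)
    qed
  qed
  thus ?thesis unfolding ext_trace_form by blast
qed

lemma NN_closure:
  assumes "N \<in> NN G \<Phi> st"
  shows "0 \<in> N" "\<forall>a\<in>N. \<forall>b\<in>N. a + b \<in> N" "\<forall>a. \<forall>n\<in>N. kst st a * n * a \<in> N"
proof -
  have h: "hcone UNIV (+) (*) uminus 0 1 (kst st) N" using assms by (simp add: NN_def)
  thus "0 \<in> N" "\<forall>a\<in>N. \<forall>b\<in>N. a + b \<in> N" unfolding hcone_def by blast+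
  show "\<forall>a. \<forall>n\<in>N. kst st a * n * a \<in> N"
    using h unfolding hcone_def by (metis UNIV_I kst_kst)
qed

text \<open>Statement (4): N^{ec} = Inter N_sigma, extension commutes with the intersection,
  and each N_sigma has extension N^e.\<close>
lemma ext_contr_ext:
  assumes "N \<in> NN G \<Phi> st"
  shows "ext G \<Phi> st (contr (ext G \<Phi> st N)) = ext G \<Phi> st N"
proof -
  have "ext G \<Phi> st (contr (ext G \<Phi> st N)) = (\<Inter>\<sigma>\<in>G. ext G \<Phi> st (Nsig G \<Phi> st N \<sigma>))"
    by (simp add: contr_ext[OF NN_closure[OF assms]] ext_INT)
  also have "\<dots> = (\<Inter>\<sigma>\<in>G. ext G \<Phi> st N)" by (simp add: ext_Nsig)
  also have "\<dots> = ext G \<Phi> st N" using idG by blast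
  finally show ?thesis .
qed

lemma MM_contr_closure:
  assumes "M \<in> MM G \<Phi> st"
  shows "0 \<in> contr M" "\<forall>a\<in>contr M. \<forall>b\<in>contr M. a + b \<in> contr M"
    "\<forall>a. \<forall>n\<in>contr M. kst st a * n * a \<in> contr M"
proof -
  have h: "hcone (Dset G) dadd mul dneg dzero done_D st M" using assms by (simp add: MM_def)
  thus "0 \<in> contr M" "\<forall>a\<in>contr M. \<forall>b\<in>contr M. a + b \<in> contr M"
    unfolding hcone_def by (auto simp: contr_def emb_zero emb_add)
  show "\<forall>a. \<forall>n\<in>contr M. kst st a * n * a \<in> contr M"
  proof (intro allI ballI)
    fix a n assume "n \<in> contr M"
    hence "emb (kst st a) \<cdot> emb n \<cdot> st (emb (kst st a)) \<in> M"
      using h emb_Dset unfolding hcone_def contr_def by blast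
    thus "kst st a * n * a \<in> contr M" by (simp add: st_emb kst_kst emb_emb contr_def)
  qed
qed

text \<open>Statement (5): k in (M^c)_sigma iff e_sigma^* k e_sigma in M, and conjugation by the
  unit e_sigma preserves M in both directions.\<close>
lemma Nsig_contr:
  assumes M: "M \<in> MM G \<Phi> st" and s: "\<sigma> \<in> G"
  shows "Nsig G \<Phi> st (contr M) \<sigma> = contr M"
proof -
  have conj: "a \<cdot> x \<cdot> st a \<in> M" if "a \<in> Dset G" "x \<in> M" for a x
    using M that unfolding MM_def hcone_def by blast
  obtain v where v: "v \<in> Dset G" "ebas \<sigma> \<cdot> v = done_D" "v \<cdot> ebas \<sigma> = done_D"
    using ebas_unit[OF s] .
  have Nsig_iff: "k \<in> Nsig G \<Phi> st (contr M) \<sigma> \<longleftrightarrow> st (ebas \<sigma>) \<cdot> emb k \<cdot> ebas \<sigma> \<in> M" for k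
    by (simp add: Nsig_def contr_def conj_ebas_emb[OF s])
  have undo: "st v \<cdot> (st (ebas \<sigma>) \<cdot> emb k \<cdot> ebas \<sigma>) \<cdot> st (st v) = emb k" for k
  proof -
    have "st v \<cdot> (st (ebas \<sigma>) \<cdot> emb k \<cdot> ebas \<sigma>) \<cdot> st (st v)
        = st (ebas \<sigma> \<cdot> v) \<cdot> emb k \<cdot> (ebas \<sigma> \<cdot> v)"
      by (simp add: st_st st_mul ebas_Dset[OF s] v(1) dmul_assoc)
    thus ?thesis by (simp add: v st_one done_left done_right emb_Dset dmul_Dset)
  qed
  show ?thesis
  proof (rule set_eqI, rule iffI)
    fix k assume "k \<in> Nsig G \<Phi> st (contr M) \<sigma>"
    thus "k \<in> contr M"
      using conj[OF st_Dset[OF v(1)]] undo by (metis Nsig_iff contr_def mem_Collect_eq)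
  next
    fix k assume "k \<in> contr M"
    hence "st (ebas \<sigma>) \<cdot> emb k \<cdot> st (st (ebas \<sigma>)) \<in> M"
      using conj[OF st_Dset[OF ebas_Dset[OF s]]] by (simp add: contr_def)
    thus "k \<in> Nsig G \<Phi> st (contr M) \<sigma>" by (simp add: Nsig_iff st_st ebas_Dset[OF s])
  qed
qed

lemma contr_ext_contr:
  assumes M: "M \<in> MM G \<Phi> st" shows "contr (ext G \<Phi> st (contr M)) = contr M"
  using contr_ext[OF MM_contr_closure[OF M]] Nsig_contr[OF M] idG by auto

end

theorem theorem4p2:
  fixes G :: "('k::field_char_0 \<Rightarrow> 'k) set"
    and \<Phi> :: "('k \<Rightarrow> 'k) \<Rightarrow> ('k \<Rightarrow> 'k) \<Rightarrow> 'k"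
    and st :: "'k dvec \<Rightarrow> 'k dvec"
  assumes galois: "galois_group G"
    and cocycle: "normalized_cocycle G \<Phi>"
    and division: "division_algebra G \<Phi>"
    and invol: "involution G \<Phi> st"
    and K_stable: "\<forall>k. st (emb k) \<in> range emb"
    and a_in_K: "\<forall>\<sigma>\<in>G. dmul G \<Phi> (st (ebas \<sigma>)) (ebas \<sigma>) \<in> range emb"
    and NN_ne: "NN G \<Phi> st \<noteq> {}"
  shows "(\<forall>N\<in>NN G \<Phi> st.
            ext G \<Phi> st N = {u\<in>Dset G. \<forall>d\<in>Dset G. fD (dmul G \<Phi> (dmul G \<Phi> (st d) u) d) \<in> N}
          \<and> contr (ext G \<Phi> st N) = (\<Inter>\<sigma>\<in>G. Nsig G \<Phi> st N \<sigma>)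
          \<and> (\<forall>\<sigma>\<in>G. ext G \<Phi> st (Nsig G \<Phi> st N \<sigma>) = ext G \<Phi> st N)
          \<and> ext G \<Phi> st (contr (ext G \<Phi> st N)) = ext G \<Phi> st N)
       \<and> (\<forall>M\<in>MM G \<Phi> st.
            (\<forall>\<sigma>\<in>G. Nsig G \<Phi> st (contr M) \<sigma> = contr M)
          \<and> contr (ext G \<Phi> st (contr M)) = contr M)"
proof -
  interpret involutive_crossed_product G \<Phi> st
    using galois cocycle division invol K_stable a_in_K
    by (simp add: involutive_crossed_product_def involutive_crossed_product_axioms_def
        crossed_product_def)
  show ?thesis
  proof (intro conjI ballI)
    fix N assume N: "N \<in> NN G \<Phi> st"
    show "ext G \<Phi> st N = {u\<in>Dset G. \<forall>d\<in>Dset G. fD (st d \<cdot> u \<cdot> d) \<in> N}"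
      by (rule ext_trace_form)
    show "contr (ext G \<Phi> st N) = (\<Inter>\<sigma>\<in>G. Nsig G \<Phi> st N \<sigma>)"
      by (rule contr_ext[OF NN_closure[OF N]])
    show "ext G \<Phi> st (contr (ext G \<Phi> st N)) = ext G \<Phi> st N"
      by (rule ext_contr_ext[OF N])
    fix \<sigma> assume "\<sigma> \<in> G"
    thus "ext G \<Phi> st (Nsig G \<Phi> st N \<sigma>) = ext G \<Phi> st N" by (rule ext_Nsig)
  next
    fix M assume M: "M \<in> MM G \<Phi> st"
    show "contr (ext G \<Phi> st (contr M)) = contr M" by (rule contr_ext_contr[OF M])
    fix \<sigma> assume "\<sigma> \<in> G"
    thus "Nsig G \<Phi> st (contr M) \<sigma> = contr M" by (rule Nsig_contr[OF M])
  qed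
qed

end
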